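(* Let $K$ be a finite simplicial complex, let $f\colon K\to\mathbb{R}$ be an injective filtration function, and let $\sigma_1,\sigma_2$ be two $n$-dimensional simplices of $K$. Assume that for some $\varepsilon>0$ we have $$f(\sigma_1)<f(\sigma_2)<f(\sigma_1)+2\varepsilon.$$ Then there exists an injective filtration function $g$ on $K$ such that $\|f-g\|_\infty\le\varepsilon$ and $g(\sigma_2)<g(\sigma_1)$.
   Context: A filtration function on a finite simplicial complex $K$ is a map $f\colon K\to\mathbb{R}$ such that $f(\sigma)\le f(\tau)$ whenever $\sigma$ is a face of $\tau$. For two functions $f,g\colon K\to\mathbb{R}$, $\|f-g\|_\infty=\max_{\sigma\in K}|f(\sigma)-g(\sigma)|$. *)

theory Defs
  imports Complex_Main
begin

definition finite_simplicial_complex :: "'a set set \<Rightarrow> bool" where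
  "finite_simplicial_complex K \<longleftrightarrow>
     finite K \<and> (\<forall>\<sigma>\<in>K. finite \<sigma> \<and> \<sigma> \<noteq> {}) \<and>
     (\<forall>\<sigma>\<in>K. \<forall>\<tau>. \<tau> \<subseteq> \<sigma> \<and> \<tau> \<noteq> {} \<longrightarrow> \<tau> \<in> K)"

definition simplex_dim :: "'a set \<Rightarrow> nat" where
  "simplex_dim \<sigma> = card \<sigma> - 1"

definition filtration :: "'a set set \<Rightarrow> ('a set \<Rightarrow> real) \<Rightarrow> bool" where
  "filtration K f \<longleftrightarrow> (\<forall>\<sigma>\<in>K. \<forall>\<tau>\<in>K. \<sigma> \<subseteq> \<tau> \<longrightarrow> f \<sigma> \<le> f \<tau>)"

definition sup_dist :: "'a set set \<Rightarrow> ('a set \<Rightarrow> real) \<Rightarrow> ('a set \<Rightarrow> real) \<Rightarrow> real" where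
  "sup_dist K f g = Max ((\<lambda>\<sigma>. \<bar>f \<sigma> - g \<sigma>\<bar>) ` K)"

end

theory Submission
  imports Defs
begin

text \<open>Write \<open>a = f \<sigma>1 < b = f \<sigma>2\<close> and \<open>\<delta> = b - a < 2 \<epsilon>\<close>. Fix \<open>t\<close> with \<open>0 < t < 1/2\<close> and
  \<open>(1 - t) \<delta> \<le> \<epsilon>\<close>. Keep \<open>f\<close> outside \<open>[a, b]\<close>; inside, contract the values of the cofaces
  of \<open>\<sigma>1\<close> towards \<open>b\<close> and those of all other simplices towards \<open>a\<close>, by the factor \<open>t\<close>.
  Both contractions are strictly increasing and move values by at most \<open>(1 - t) \<delta>\<close>; the first
  dominates the second, which keeps the new function monotone along faces, and since \<open>t < 1/2\<close>
  their images of \<open>[a, b]\<close> are disjoint, which keeps it injective. As \<open>\<sigma>2\<close> has the same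
  dimension as \<open>\<sigma>1\<close>, it is not a coface of \<open>\<sigma>1\<close>, so \<open>\<sigma>1\<close> now sits above \<open>\<sigma>2\<close>.\<close>

definition contract_interval :: "real \<Rightarrow> real \<Rightarrow> real \<Rightarrow> real \<Rightarrow> real \<Rightarrow> real" where
  "contract_interval a b p t x = (if x \<in> {a..b} then p + t * (x - p) else x)"

lemma contract_interval_in_interval_iff:
  assumes "p \<in> {a..b}" "0 \<le> t" "t \<le> 1"
  shows "contract_interval a b p t x \<in> {a..b} \<longleftrightarrow> x \<in> {a..b}"
proof (cases "x \<in> {a..b}")
  case True
  then have "t * (a - p) \<le> t * (x - p)" "t * (x - p) \<le> t * (b - p)"
    using assms by (auto intro: mult_left_mono)
  moreover have "a \<le> p + t * (a - p)" "p + t * (b - p) \<le> b"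
    using assms mult_left_le_one_le[of "p - a" t] mult_left_le_one_le[of "b - p" t]
    by (auto simp: algebra_simps)
  ultimately show ?thesis
    using True by (auto simp: contract_interval_def)
qed (auto simp: contract_interval_def)

lemma contract_interval_outside [simp]:
  "x \<notin> {a..b} \<Longrightarrow> contract_interval a b p t x = x"
  by (auto simp: contract_interval_def)

lemma strict_mono_contract_interval:
  assumes "p \<in> {a..b}" "0 < t" "t \<le> 1"
  shows "strict_mono (contract_interval a b p t)"
proof (rule strict_monoI)
  fix x y :: real
  assume "x < y"
  let ?c = "contract_interval a b p t"
  have inside: "?c x \<in> {a..b} \<longleftrightarrow> x \<in> {a..b}" "?c y \<in> {a..b} \<longleftrightarrow> y \<in> {a..b}"
    using assms contract_interval_in_interval_iff by auto
  show "?c x < ?c y"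
  proof (cases "x \<in> {a..b} \<and> y \<in> {a..b}")
    case True
    have "t * x < t * y"
      using \<open>x < y\<close> assms by simp
    then show ?thesis
      using True by (simp add: contract_interval_def algebra_simps)
  next
    case False
    then consider "x \<notin> {a..b}" "y \<notin> {a..b}" | "x \<in> {a..b}" "y \<notin> {a..b}"
      | "x \<notin> {a..b}" "y \<in> {a..b}"
      by blast
    then show ?thesis
    proof cases
      case 1
      then show ?thesis
        using \<open>x < y\<close> by simp
    next
      case 2
      then have "?c x \<le> b" "b < y"
        using inside \<open>x < y\<close> by auto
      then show ?thesis
        using 2 by simp
    next
      case 3
      then have "x < a" "a \<le> ?c y"
        using inside \<open>x < y\<close> by auto
      then show ?thesis
        using 3 by simp
    qed
  qed
qed

lemma abs_contract_interval_diff_le: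
  assumes "p \<in> {a..b}" "t \<le> 1"
  shows "\<bar>contract_interval a b p t x - x\<bar> \<le> (1 - t) * (b - a)"
proof (cases "x \<in> {a..b}")
  case True
  then have "contract_interval a b p t x - x = (1 - t) * (p - x)"
    by (simp add: contract_interval_def algebra_simps)
  then have "\<bar>contract_interval a b p t x - x\<bar> = (1 - t) * \<bar>p - x\<bar>"
    using assms by (simp add: abs_mult)
  also have "\<dots> \<le> (1 - t) * (b - a)"
    using True assms by (intro mult_left_mono) auto
  finally show ?thesis .
next
  case False
  have "a \<le> b" "0 \<le> 1 - t"
    using assms by auto
  then show ?thesis
    using False by simp
qed

lemma contract_interval_left_le_right:
  assumes "a \<le> b" "t \<le> 1"
  shows "contract_interval a b a t x \<le> contract_interval a b b t x"
proof -
  have "(1 - t) * a \<le> (1 - t) * b"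
    using assms by (intro mult_left_mono) auto
  then show ?thesis
    by (simp add: contract_interval_def algebra_simps)
qed

lemma contract_interval_left_eq_right_imp_eq:
  assumes "a < b" "0 \<le> t" "t < 1/2"
    and "contract_interval a b a t u = contract_interval a b b t v"
  shows "u = v"
proof -
  have images: "contract_interval a b a t u \<in> {a..b} \<longleftrightarrow> u \<in> {a..b}"
    "contract_interval a b b t v \<in> {a..b} \<longleftrightarrow> v \<in> {a..b}"
    using assms contract_interval_in_interval_iff[of a a b t u]
      contract_interval_in_interval_iff[of b a b t v] by auto
  have "\<not> (u \<in> {a..b} \<and> v \<in> {a..b})"
  proof
    assume "u \<in> {a..b} \<and> v \<in> {a..b}"
    then have "t * (u - a) \<le> t * (b - a)" "t * (b - v) \<le> t * (b - a)"
      using assms by (auto intro: mult_left_mono)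
    moreover have "2 * t * (b - a) < b - a"
      using assms by simp
    ultimately show False
      using assms \<open>u \<in> {a..b} \<and> v \<in> {a..b}\<close> by (simp add: contract_interval_def algebra_simps)
  qed
  moreover have "u \<in> {a..b} \<longleftrightarrow> v \<in> {a..b}"
    using assms(4) images by simp
  ultimately have "u \<notin> {a..b}" "v \<notin> {a..b}"
    by blast+
  then show ?thesis
    using assms(4) by simp
qed

lemma filtration_reparam_cofaces:
  assumes "filtration K f" "mono \<phi>" "mono \<psi>" "\<And>x. \<phi> x \<le> \<psi> x"
  shows "filtration K (\<lambda>\<tau>. if \<sigma> \<subseteq> \<tau> then \<psi> (f \<tau>) else \<phi> (f \<tau>))"
  unfolding filtration_def
proof (intro ballI impI)
  fix \<tau> \<tau>' assume "\<tau> \<in> K" "\<tau>' \<in> K" "\<tau> \<subseteq> \<tau>'"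
  then have "f \<tau> \<le> f \<tau>'"
    using assms(1) by (auto simp: filtration_def)
  then have "\<phi> (f \<tau>) \<le> \<phi> (f \<tau>')" "\<psi> (f \<tau>) \<le> \<psi> (f \<tau>')"
    using assms(2,3) by (auto dest: monoD)
  then show "(if \<sigma> \<subseteq> \<tau> then \<psi> (f \<tau>) else \<phi> (f \<tau>)) \<le> (if \<sigma> \<subseteq> \<tau>' then \<psi> (f \<tau>') else \<phi> (f \<tau>'))"
    using \<open>\<tau> \<subseteq> \<tau>'\<close> assms(4)[of "f \<tau>"] by auto
qed

lemma inj_on_reparam_cofaces:
  assumes "inj_on f K" "inj \<phi>" "inj \<psi>" "\<And>u v. \<phi> u = \<psi> v \<Longrightarrow> u = v"
  shows "inj_on (\<lambda>\<tau>. if \<sigma> \<subseteq> \<tau> then \<psi> (f \<tau>) else \<phi> (f \<tau>)) K"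
proof (rule inj_onI)
  fix \<tau> \<tau>' assume "\<tau> \<in> K" "\<tau>' \<in> K"
    and "(if \<sigma> \<subseteq> \<tau> then \<psi> (f \<tau>) else \<phi> (f \<tau>)) = (if \<sigma> \<subseteq> \<tau>' then \<psi> (f \<tau>') else \<phi> (f \<tau>'))"
  then consider "\<psi> (f \<tau>) = \<psi> (f \<tau>')" | "\<phi> (f \<tau>) = \<phi> (f \<tau>')"
    | "\<psi> (f \<tau>) = \<phi> (f \<tau>')" | "\<phi> (f \<tau>) = \<psi> (f \<tau>')"
    by (cases "\<sigma> \<subseteq> \<tau>"; cases "\<sigma> \<subseteq> \<tau>'") simp_all
  then have "f \<tau> = f \<tau>'"
  proof cases
    case 1
    then show ?thesis
      by (rule injD[OF assms(3)])
  next
    case 2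
    then show ?thesis
      by (rule injD[OF assms(2)])
  next
    case 3
    then show ?thesis
      using assms(4) by (metis sym)
  next
    case 4
    then show ?thesis
      using assms(4) by blast
  qed
  then show "\<tau> = \<tau>'"
    using assms(1) \<open>\<tau> \<in> K\<close> \<open>\<tau>' \<in> K\<close> by (auto dest: inj_onD)
qed

lemma sup_dist_le:
  assumes "finite K" "K \<noteq> {}" "\<And>\<tau>. \<tau> \<in> K \<Longrightarrow> \<bar>f \<tau> - g \<tau>\<bar> \<le> c"
  shows "sup_dist K f g \<le> c"
  using assms by (simp add: sup_dist_def)

lemma simplex_dim_eq_subset_imp_eq:
  assumes "finite \<tau>" "\<sigma> \<noteq> {}" "simplex_dim \<sigma> = simplex_dim \<tau>" "\<sigma> \<subseteq> \<tau>"
  shows "\<sigma> = \<tau>"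
proof -
  have "card \<sigma> > 0"
    using assms by (meson card_gt_0_iff finite_subset)
  then have "card \<sigma> = card \<tau>"
    using assms(3) card_mono[OF assms(1,4)] by (simp add: simplex_dim_def)
  then show ?thesis
    using assms by (simp add: card_subset_eq)
qed

definition lift_cofaces :: "'a set \<Rightarrow> real \<Rightarrow> real \<Rightarrow> real \<Rightarrow> ('a set \<Rightarrow> real) \<Rightarrow> 'a set \<Rightarrow> real" where
  "lift_cofaces \<sigma> a b t f \<tau> =
     (if \<sigma> \<subseteq> \<tau> then contract_interval a b b t (f \<tau>) else contract_interval a b a t (f \<tau>))"

lemma filtration_lift_cofaces:
  assumes "filtration K f" "a \<le> b" "0 < t" "t \<le> 1"
  shows "filtration K (lift_cofaces \<sigma> a b t f)"
  unfolding lift_cofaces_def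
  using assms strict_mono_contract_interval[of a a b t] strict_mono_contract_interval[of b a b t]
  by (intro filtration_reparam_cofaces) (auto intro: strict_mono_mono contract_interval_left_le_right)

lemma inj_on_lift_cofaces:
  assumes "inj_on f K" "a < b" "0 < t" "t < 1/2"
  shows "inj_on (lift_cofaces \<sigma> a b t f) K"
proof -
  have inj: "inj (contract_interval a b a t)" "inj (contract_interval a b b t)"
    using assms by (simp_all add: strict_mono_imp_inj_on strict_mono_contract_interval)
  have "u = v" if "contract_interval a b a t u = contract_interval a b b t v" for u v
    using assms(2) less_imp_le[OF assms(3)] assms(4) that by (rule contract_interval_left_eq_right_imp_eq)
  then show ?thesis
    unfolding lift_cofaces_def by (rule inj_on_reparam_cofaces[OF assms(1) inj])
qed

lemma abs_lift_cofaces_diff_le: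
  assumes "a \<le> b" "t \<le> 1"
  shows "\<bar>f \<tau> - lift_cofaces \<sigma> a b t f \<tau>\<bar> \<le> (1 - t) * (b - a)"
  using assms abs_contract_interval_diff_le[of a a b t "f \<tau>"] abs_contract_interval_diff_le[of b a b t "f \<tau>"]
  by (simp add: lift_cofaces_def abs_minus_commute)

lemma lift_cofaces_reverses_order:
  assumes "a < b" "t < 1/2" "f \<sigma> = a" "f \<tau> = b" "\<not> \<sigma> \<subseteq> \<tau>"
  shows "lift_cofaces \<sigma> a b t f \<tau> < lift_cofaces \<sigma> a b t f \<sigma>"
proof -
  have "lift_cofaces \<sigma> a b t f \<sigma> = b + t * (a - b)" "lift_cofaces \<sigma> a b t f \<tau> = a + t * (b - a)"
    using assms by (simp_all add: lift_cofaces_def contract_interval_def)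
  moreover have "2 * t * (b - a) < b - a"
    using assms(1,2) by simp
  ultimately show ?thesis
    by (simp add: algebra_simps)
qed

lemma exists_contraction_factor:
  fixes \<delta> \<epsilon> :: real
  assumes "0 < \<delta>" "\<delta> < 2 * \<epsilon>"
  obtains t where "0 < t" "t < 1/2" "(1 - t) * \<delta> \<le> \<epsilon>"
proof -
  have "1 - \<epsilon> / \<delta> < 1/2"
    using assms by (simp add: field_simps)
  then have "max 0 (1 - \<epsilon> / \<delta>) < 1/2"
    by (simp only: max_less_iff_conj) simp
  then obtain t where t: "max 0 (1 - \<epsilon> / \<delta>) < t" "t < 1/2"
    using dense by blast
  then have "(1 - t) * \<delta> \<le> \<epsilon>"
    using assms by (simp add: field_simps)
  with t show ?thesis
    by (intro that) auto
qed

theorem proposition2p1: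
  fixes K :: "'a set set" and f :: "'a set \<Rightarrow> real"
    and \<sigma>1 \<sigma>2 :: "'a set" and n :: nat and \<epsilon> :: real
  assumes "finite_simplicial_complex K"
    and "filtration K f" and "inj_on f K"
    and "\<sigma>1 \<in> K" and "\<sigma>2 \<in> K"
    and "simplex_dim \<sigma>1 = n" and "simplex_dim \<sigma>2 = n"
    and "\<epsilon> > 0"
    and "f \<sigma>1 < f \<sigma>2" and "f \<sigma>2 < f \<sigma>1 + 2 * \<epsilon>"
  shows "\<exists>g :: 'a set \<Rightarrow> real. filtration K g \<and> inj_on g K \<and>
           sup_dist K f g \<le> \<epsilon> \<and> g \<sigma>2 < g \<sigma>1"
proof -
  obtain t where t: "0 < t" "t < 1/2" "(1 - t) * (f \<sigma>2 - f \<sigma>1) \<le> \<epsilon>"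
    using exists_contraction_factor[of "f \<sigma>2 - f \<sigma>1" \<epsilon>] assms(9,10) by auto
  define g where "g = lift_cofaces \<sigma>1 (f \<sigma>1) (f \<sigma>2) t f"
  have "finite K" "finite \<sigma>2" "\<sigma>1 \<noteq> {}"
    using assms(1,4,5) unfolding finite_simplicial_complex_def by blast+
  then have "sup_dist K f g \<le> \<epsilon>"
    using assms(4,9) t abs_lift_cofaces_diff_le[of "f \<sigma>1" "f \<sigma>2" t f _ \<sigma>1]
    by (intro sup_dist_le) (auto simp: g_def intro: order_trans)
  moreover have "\<not> \<sigma>1 \<subseteq> \<sigma>2"
    using simplex_dim_eq_subset_imp_eq[of \<sigma>2 \<sigma>1] \<open>finite \<sigma>2\<close> \<open>\<sigma>1 \<noteq> {}\<close> assms(6,7,9) by auto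
  then have "g \<sigma>2 < g \<sigma>1"
    using assms(9) t by (simp add: g_def lift_cofaces_reverses_order)
  moreover have "filtration K g" "inj_on g K"
    using assms(2,3,9) t by (simp_all add: g_def filtration_lift_cofaces inj_on_lift_cofaces)
  ultimately show ?thesis
    by blast
qed

end
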